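(* Let $A$ and $B$ be finite posets. Then: (1) $A^B=\emptyset$ if and only if $A=\emptyset$ and $B\neq\emptyset$. (2) $A^B$ is an antichain if and only if $A$ is an antichain or $B=\emptyset$; in that case $|A^B|=|A|^c$ if $A\neq\emptyset$ or $B\neq\emptyset$, where $c$ is the number of connected components of $B$, and $|A^B|=1$ if $A=B=\emptyset$. (3) Assume $A\neq\emptyset$ and let $f,g\in A^B$ with $f\le g$. Then $\mathrm{h}([f,g])=\mathrm{h}(A^B)$ (the height of the interval $[f,g]$ of $A^B$ equals the height of $A^B$) if and only if $f,g\in\mathcal D(A^B)$ and $\mathrm{h}([f(b),g(b)])=\mathrm{h}(A)$ for all $b\in B$, where $[f(b),g(b)]$ is an interval of $A$. (4) If $A\neq\emptyset$, then $\mathrm{h}(A^B)=\mathrm{h}(A)\,|B|$.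
   Context: For posets $P$ and $Q$, $P^Q$ denotes the set of order-preserving maps $Q\to P$, ordered pointwise: $f\le g$ iff $f(q)\le g(q)$ in $P$ for all $q\in Q$; in particular $P^\emptyset$ consists of the single empty map. $\mathcal D(P^Q)$ is the set of $g\in P^Q$ that are constant on each connected component of $Q$. For a finite non-empty poset $P$, its height $\mathrm{h}(P)$ is the largest value of $|K|-1$ over chains $K\subseteq P$. For $x\le y$ in a poset, $[x,y]=\{z: x\le z\le y\}$ is an interval, regarded as a poset. *)

theory Defs
  imports "HOL-Library.FuncSet"
begin

definition poset :: "'a set \<Rightarrow> ('a \<Rightarrow> 'a \<Rightarrow> bool) \<Rightarrow> bool" where
  "poset P le \<longleftrightarrow> (\<forall>x\<in>P. le x x)
     \<and> (\<forall>x\<in>P. \<forall>y\<in>P. le x y \<and> le y x \<longrightarrow> x = y)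
     \<and> (\<forall>x\<in>P. \<forall>y\<in>P. \<forall>z\<in>P. le x y \<and> le y z \<longrightarrow> le x z)"

text \<open>P^Q: order-preserving maps Q to P (extensional: undefined outside Q).\<close>
definition hom_set :: "'a set \<Rightarrow> ('a \<Rightarrow> 'a \<Rightarrow> bool) \<Rightarrow> 'b set \<Rightarrow> ('b \<Rightarrow> 'b \<Rightarrow> bool) \<Rightarrow> ('b \<Rightarrow> 'a) set" where
  "hom_set P leP Q leQ = {f \<in> Q \<rightarrow>\<^sub>E P. \<forall>x\<in>Q. \<forall>y\<in>Q. leQ x y \<longrightarrow> leP (f x) (f y)}"

definition pw_le :: "'b set \<Rightarrow> ('a \<Rightarrow> 'a \<Rightarrow> bool) \<Rightarrow> ('b \<Rightarrow> 'a) \<Rightarrow> ('b \<Rightarrow> 'a) \<Rightarrow> bool" where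
  "pw_le Q leP f g \<longleftrightarrow> (\<forall>q\<in>Q. leP (f q) (g q))"

definition antichain_on :: "'a set \<Rightarrow> ('a \<Rightarrow> 'a \<Rightarrow> bool) \<Rightarrow> bool" where
  "antichain_on P le \<longleftrightarrow> (\<forall>x\<in>P. \<forall>y\<in>P. le x y \<longrightarrow> x = y)"

definition chain_on :: "'a set \<Rightarrow> ('a \<Rightarrow> 'a \<Rightarrow> bool) \<Rightarrow> bool" where
  "chain_on K le \<longleftrightarrow> (\<forall>x\<in>K. \<forall>y\<in>K. le x y \<or> le y x)"

text \<open>Height: largest |K| - 1 over chains K in P (meant for finite non-empty P).\<close>
definition height :: "'a set \<Rightarrow> ('a \<Rightarrow> 'a \<Rightarrow> bool) \<Rightarrow> nat" where
  "height P le = Max {card K - 1 | K. K \<subseteq> P \<and> chain_on K le}"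

definition interval :: "'a set \<Rightarrow> ('a \<Rightarrow> 'a \<Rightarrow> bool) \<Rightarrow> 'a \<Rightarrow> 'a \<Rightarrow> 'a set" where
  "interval P le x y = {z \<in> P. le x z \<and> le z y}"

definition comparable_rel :: "'b set \<Rightarrow> ('b \<Rightarrow> 'b \<Rightarrow> bool) \<Rightarrow> ('b \<times> 'b) set" where
  "comparable_rel Q le = {(x, y). x \<in> Q \<and> y \<in> Q \<and> (le x y \<or> le y x)}"

definition components :: "'b set \<Rightarrow> ('b \<Rightarrow> 'b \<Rightarrow> bool) \<Rightarrow> 'b set set" where
  "components Q le = Q // ((comparable_rel Q le)\<^sup>*)"

definition D_set :: "'a set \<Rightarrow> ('a \<Rightarrow> 'a \<Rightarrow> bool) \<Rightarrow> 'b set \<Rightarrow> ('b \<Rightarrow> 'b \<Rightarrow> bool) \<Rightarrow> ('b \<Rightarrow> 'a) set" where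
  "D_set P leP Q leQ = {g \<in> hom_set P leP Q leQ. \<forall>C\<in>components Q leQ. \<forall>x\<in>C. \<forall>y\<in>C. g x = g y}"

end

(*
  Both height statements rest on two counting arguments for chains of maps.
  Upper bound: if K is a chain in A^B whose values at b lie in S b, the values of K at b form a
  chain of S b and every strict step of K raises some coordinate strictly, so
  |K| <= 1 + sum_b h(S b).
  Lower bound: given chains c_0 < ... < c_h in A, raise the coordinates one step at a time, running
  through B against a linear extension; every intermediate map is order-preserving, which yields
  a chain of h |B| + 1 maps.
  With S b = A this gives h(A^B) = h(A) |B|. With S b = [f b, g b], full height of [f, g] forces
  every [f b, g b] to have full height, and such an interval admits no comparable point outside
  it; hence f and g cannot change value along a comparability of B. Conversely, for f and g
  constant on components the chains in the [f b, g b] can be chosen constant on components, and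
  the construction applies. If A is an antichain, every map is constant on components, so A^B is
  in bijection with the maps from the components of B to A.
*)

theory Submission
  imports Defs "HOL-Library.Infinite_Set"
begin

lemma poset_refl: "poset A le \<Longrightarrow> x \<in> A \<Longrightarrow> le x x"
  and poset_antisym: "poset A le \<Longrightarrow> x \<in> A \<Longrightarrow> y \<in> A \<Longrightarrow> le x y \<Longrightarrow> le y x \<Longrightarrow> x = y"
  and poset_trans: "poset A le \<Longrightarrow> x \<in> A \<Longrightarrow> y \<in> A \<Longrightarrow> z \<in> A \<Longrightarrow> le x y \<Longrightarrow> le y z \<Longrightarrow> le x z"
  unfolding poset_def by blast+

lemma poset_subset: "poset A le \<Longrightarrow> S \<subseteq> A \<Longrightarrow> poset S le"
  unfolding poset_def by blast

section \<open>Heights of finite posets\<close>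

lemma finite_chain_lengths: "finite P \<Longrightarrow> finite {card K - 1 | K. K \<subseteq> P \<and> chain_on K le}"
  by (rule finite_subset[of _ "(\<lambda>K. card K - 1) ` Pow P"]) auto

lemma card_chain_le_height:
  assumes "finite P" "K \<subseteq> P" "chain_on K le"
  shows "card K \<le> height P le + 1"
proof -
  have "card K - 1 \<le> height P le"
    unfolding height_def using assms by (intro Max_ge finite_chain_lengths) auto
  then show ?thesis by linarith
qed

lemma height_leI:
  assumes "finite P" "\<And>K. K \<subseteq> P \<Longrightarrow> chain_on K le \<Longrightarrow> card K \<le> n + 1"
  shows "height P le \<le> n"
proof -
  have "chain_on {} le" by (simp add: chain_on_def)
  then show ?thesis
    unfolding height_def using assms
    by (subst Max_le_iff) (auto intro: finite_chain_lengths simp: le_diff_conv)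
qed

lemma height_mono:
  assumes "finite P" "S \<subseteq> P"
  shows "height S le \<le> height P le"
proof (rule height_leI)
  show "finite S" using assms finite_subset by blast
  show "card K \<le> height P le + 1" if "K \<subseteq> S" "chain_on K le" for K
    using that assms by (intro card_chain_le_height) auto
qed

lemma height_attained:
  assumes "finite P" "P \<noteq> {}" "\<And>x. x \<in> P \<Longrightarrow> le x x"
  obtains K where "K \<subseteq> P" "chain_on K le" "card K = height P le + 1"
proof -
  have "chain_on {} le" by (simp add: chain_on_def)
  then have "height P le \<in> {card K - 1 | K. K \<subseteq> P \<and> chain_on K le}"
    unfolding height_def by (intro Max_in finite_chain_lengths assms(1)) blast
  then obtain K where K: "K \<subseteq> P" "chain_on K le" "height P le = card K - 1"
    by blast
  obtain a where a: "a \<in> P" using assms(2) by blast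
  have "chain_on {a} le" using assms(3)[OF a] by (simp add: chain_on_def)
  show ?thesis
  proof (cases "K = {}")
    case True
    then show ?thesis using that[of "{a}"] \<open>chain_on {a} le\<close> a K(3) by simp
  next
    case False
    then show ?thesis using that K finite_subset[OF K(1) assms(1)] by (simp add: card_gt_0_iff)
  qed
qed

lemma height_less_by_comparable_point:
  assumes "poset P le" "finite P" "S \<subseteq> P" "S \<noteq> {}" "x \<in> P - S"
    and "\<And>y. y \<in> S \<Longrightarrow> le x y \<or> le y x"
  shows "height S le < height P le"
proof -
  obtain K where K: "K \<subseteq> S" "chain_on K le" "card K = height S le + 1"
    using height_attained[of S le] finite_subset[OF assms(3,2)] assms(3,4) poset_refl[OF assms(1)]
    by blast
  have "chain_on (insert x K) le"
    using K(1,2) assms(5,6) poset_refl[OF assms(1)] by (auto simp: chain_on_def)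
  then have "card (insert x K) \<le> height P le + 1"
    using K(1) assms(3,5) by (intro card_chain_le_height[OF assms(2)]) auto
  moreover have "card (insert x K) = card K + 1"
    using K(1) assms(5) finite_subset[OF K(1) finite_subset[OF assms(3,2)]]
    by (subst card_insert_disjoint) auto
  ultimately show ?thesis using K(3) by linarith
qed

section \<open>Linear extensions and enumerated chains\<close>

lemma card_strict_down_set_less:
  assumes "poset S le" "finite S" "x \<in> S" "y \<in> S" "le x y" "x \<noteq> y"
  shows "card {z \<in> S. le z x \<and> z \<noteq> x} < card {z \<in> S. le z y \<and> z \<noteq> y}"
proof (rule psubset_card_mono)
  have "le z y \<and> z \<noteq> y" if "z \<in> S" "le z x" "z \<noteq> x" for z
    using that assms poset_trans[OF assms(1) that(1) assms(3,4)] poset_antisym[OF assms(1) assms(3,4)]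
    by metis
  then show "{z \<in> S. le z x \<and> z \<noteq> x} \<subset> {z \<in> S. le z y \<and> z \<noteq> y}"
    using assms(3,5,6) by blast
qed (use assms(2) in simp)

lemma finite_poset_linear_extension:
  assumes "poset S le" "finite S"
  obtains pos where "bij_betw pos S {..<card S}"
    and "\<And>x y. x \<in> S \<Longrightarrow> y \<in> S \<Longrightarrow> le x y \<Longrightarrow> pos x \<le> pos y"
proof -
  define n where "n = card S"
  obtain idx where idx: "bij_betw idx S {..<n}"
    using ex_bij_betw_finite_nat[OF assms(2)] by (auto simp: n_def atLeast0LessThan)
  have idx_less: "idx x < n" if "x \<in> S" for x
    using idx that by (auto dest: bij_betw_apply)
  \<comment> \<open>Number of strictly smaller elements, ties broken by \<open>idx\<close>.\<close>
  define \<kappa> where "\<kappa> x = card {z \<in> S. le z x \<and> z \<noteq> x} * n + idx x" for x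
  have \<kappa>_less: "\<kappa> x < \<kappa> y" if "x \<in> S" "y \<in> S" "le x y" "x \<noteq> y" for x y
  proof -
    have "(card {z \<in> S. le z x \<and> z \<noteq> x} + 1) * n \<le> card {z \<in> S. le z y \<and> z \<noteq> y} * n"
      using card_strict_down_set_less[OF assms that] by (intro mult_le_mono1) simp
    then show ?thesis unfolding \<kappa>_def using idx_less[OF that(1)] by (simp add: algebra_simps)
  qed
  have "inj_on \<kappa> S"
  proof (rule inj_onI)
    fix x y assume xy: "x \<in> S" "y \<in> S" "\<kappa> x = \<kappa> y"
    then have "\<kappa> x mod n = \<kappa> y mod n" by simp
    then have "idx x = idx y" unfolding \<kappa>_def using idx_less xy(1,2) by simp
    then show "x = y" using idx xy(1,2) by (auto simp: bij_betw_def dest: inj_onD)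
  qed
  then have card_img: "card (\<kappa> ` S) = n" by (simp add: card_image n_def)
  define enum where "enum = enumerate (\<kappa> ` S)"
  have enum: "bij_betw enum {..<n} (\<kappa> ` S)"
    unfolding enum_def using finite_bij_enumerate[of "\<kappa> ` S"] assms(2) card_img by simp
  define pos where "pos x = the_inv_into {..<n} enum (\<kappa> x)" for x
  have pos_bij: "bij_betw pos S {..<n}"
    unfolding pos_def using bij_betw_trans[OF inj_on_imp_bij_betw[OF \<open>inj_on \<kappa> S\<close>]
      bij_betw_the_inv_into[OF enum]] by (simp add: comp_def)
  have enum_pos: "enum (pos x) = \<kappa> x" if "x \<in> S" for x
    unfolding pos_def using that enum by (simp add: f_the_inv_into_f_bij_betw)
  show ?thesis
  proof (rule that)
    show "bij_betw pos S {..<card S}" using pos_bij by (simp add: n_def)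
    fix x y assume xy: "x \<in> S" "y \<in> S" "le x y"
    show "pos x \<le> pos y"
    proof (rule ccontr)
      assume "\<not> pos x \<le> pos y"
      then have "enum (pos y) < enum (pos x)"
        unfolding enum_def using bij_betw_apply[OF pos_bij xy(1)] assms(2) card_img
        by (intro finite_enumerate_mono) auto
      then have "\<kappa> y < \<kappa> x" using enum_pos xy by simp
      moreover have "\<kappa> x \<le> \<kappa> y" using \<kappa>_less[OF xy] by (cases "x = y") auto
      ultimately show False by simp
    qed
  qed
qed

definition chain_seq :: "('a \<Rightarrow> 'a \<Rightarrow> bool) \<Rightarrow> 'a set \<Rightarrow> nat \<Rightarrow> (nat \<Rightarrow> 'a) \<Rightarrow> bool" where
  "chain_seq le S h e \<longleftrightarrow>
     e ` {..h} \<subseteq> S \<and> inj_on e {..h} \<and> (\<forall>i j. i \<le> j \<longrightarrow> j \<le> h \<longrightarrow> le (e i) (e j))"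

lemma chain_seq_of_chain:
  assumes "poset A le" "K \<subseteq> A" "finite K" "chain_on K le" "card K = h + 1"
  obtains e where "chain_seq le K h e"
proof -
  obtain pos where pos: "bij_betw pos K {..<card K}"
    and pos_mono: "\<And>x y. x \<in> K \<Longrightarrow> y \<in> K \<Longrightarrow> le x y \<Longrightarrow> pos x \<le> pos y"
    using finite_poset_linear_extension[OF poset_subset[OF assms(1,2)] assms(3)] by blast
  define e where "e = the_inv_into K pos"
  have e: "bij_betw e {..h} K"
    unfolding e_def using bij_betw_the_inv_into[OF pos] assms(5) by (simp add: lessThan_Suc_atMost)
  have pos_e: "pos (e i) = i" if "i \<le> h" for i
    unfolding e_def using that pos assms(5) by (simp add: f_the_inv_into_f_bij_betw less_Suc_eq_le)
  have "le (e i) (e j)" if "i \<le> j" "j \<le> h" for i j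
  proof -
    have K: "e i \<in> K" "e j \<in> K" using that bij_betw_apply[OF e] by auto
    then consider "le (e i) (e j)" | "le (e j) (e i)" using assms(4) by (auto simp: chain_on_def)
    then show ?thesis
    proof cases
      case 2
      then have "j \<le> i" using pos_mono[OF K(2,1)] pos_e that by simp
      then show ?thesis using 2 that by simp
    qed
  qed
  then show ?thesis
    using that e by (auto simp: chain_seq_def bij_betw_def)
qed

lemma chain_seq_height:
  assumes "poset P le" "finite P" "P \<noteq> {}"
  obtains e where "chain_seq le P (height P le) e"
proof -
  obtain K where K: "K \<subseteq> P" "chain_on K le" "card K = height P le + 1"
    using height_attained[OF assms(2,3)] poset_refl[OF assms(1)] by blast
  obtain e where "chain_seq le K (height P le) e"
    using chain_seq_of_chain[OF assms(1) K(1) finite_subset[OF K(1) assms(2)] K(2,3)] by blast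
  then show ?thesis using that K(1) by (auto simp: chain_seq_def)
qed

section \<open>Chains of order-preserving maps\<close>

lemma interval_subset: "interval P le x y \<subseteq> P"
  by (auto simp: interval_def)

lemma hom_set_subset_PiE: "hom_set A leA B leB \<subseteq> B \<rightarrow>\<^sub>E A"
  unfolding hom_set_def by blast

lemma hom_set_apply: "f \<in> hom_set A leA B leB \<Longrightarrow> x \<in> B \<Longrightarrow> f x \<in> A"
  unfolding hom_set_def by auto

lemma hom_set_mono:
  "f \<in> hom_set A leA B leB \<Longrightarrow> x \<in> B \<Longrightarrow> y \<in> B \<Longrightarrow> leB x y \<Longrightarrow> leA (f x) (f y)"
  unfolding hom_set_def by blast

lemma finite_hom_set: "finite A \<Longrightarrow> finite B \<Longrightarrow> finite (hom_set A leA B leB)"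
  by (rule finite_subset[of _ "B \<rightarrow>\<^sub>E A"]) (auto simp: hom_set_def finite_PiE)

lemma const_in_hom_set: "poset A leA \<Longrightarrow> a \<in> A \<Longrightarrow> (\<lambda>x\<in>B. a) \<in> hom_set A leA B leB"
  unfolding hom_set_def by (auto intro: poset_refl)

lemma card_chain_le_sum_heights:
  assumes PA: "poset A le" and "finite B" "finite K" "K \<subseteq> B \<rightarrow>\<^sub>E A"
    and chain: "chain_on K (pw_le B le)"
    and "\<And>b. b \<in> B \<Longrightarrow> finite (S b)" "\<And>k b. k \<in> K \<Longrightarrow> b \<in> B \<Longrightarrow> k b \<in> S b"
  shows "card K \<le> (\<Sum>b\<in>B. height (S b) le) + 1"
proof -
  have K_PiE: "k \<in> B \<rightarrow>\<^sub>E A" if "k \<in> K" for k using assms(4) that by blast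
  have K_val: "k b \<in> A" if "k \<in> K" "b \<in> B" for k b using PiE_mem[OF K_PiE] that by blast
  have K_le: "le (k b) (k' b) \<or> le (k' b) (k b)" if "k \<in> K" "k' \<in> K" "b \<in> B" for k k' b
    using chain that by (auto simp: chain_on_def pw_le_def)
  \<comment> \<open>\<open>\<psi>\<close> strictly increases along the chain: a strict step enlarges some \<open>down k b\<close>.\<close>
  define down where "down k b = (\<lambda>j. j b) ` {j \<in> K. le (j b) (k b)}" for k b
  define \<psi> where "\<psi> k = (\<Sum>b\<in>B. card (down k b) - 1)" for k
  have finite_down: "finite (down k b)" for k b
    unfolding down_def using assms(3) by simp
  have \<psi>_bound: "\<psi> k \<le> (\<Sum>b\<in>B. height (S b) le)" for k
    unfolding \<psi>_def
  proof (rule sum_mono)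
    fix b assume b: "b \<in> B"
    have "chain_on (down k b) le"
      unfolding down_def chain_on_def using K_le b by blast
    then have "card (down k b) \<le> height (S b) le + 1"
      using b assms(6,7) by (intro card_chain_le_height) (auto simp: down_def)
    then show "card (down k b) - 1 \<le> height (S b) le" by linarith
  qed
  have \<psi>_less: "\<psi> k < \<psi> k'" if kk': "k \<in> K" "k' \<in> K" "pw_le B le k k'" "k \<noteq> k'" for k k'
  proof -
    have down_mono: "down k b \<subseteq> down k' b" if b: "b \<in> B" for b
    proof (clarsimp simp: down_def)
      fix k'' assume "k'' \<in> K" "le (k'' b) (k b)"
      moreover have "le (k b) (k' b)" using kk'(3) b by (simp add: pw_le_def)
      ultimately show "k'' b \<in> (\<lambda>j. j b) ` {j \<in> K. le (j b) (k' b)}"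
        using poset_trans[OF PA K_val K_val K_val] kk'(1,2) b by blast
    qed
    obtain b0 where b0: "b0 \<in> B" "k b0 \<noteq> k' b0"
      using kk'(4) PiE_ext[OF K_PiE K_PiE] kk'(1,2) by metis
    have "k' b0 \<notin> down k b0"
    proof
      assume "k' b0 \<in> down k b0"
      then have "le (k' b0) (k b0)" unfolding down_def by auto
      moreover have "le (k b0) (k' b0)" using kk'(3) b0(1) by (simp add: pw_le_def)
      ultimately show False using poset_antisym[OF PA K_val K_val] kk'(1,2) b0 by blast
    qed
    moreover have "k' b0 \<in> down k' b0" and "k b0 \<in> down k b0"
      unfolding down_def using kk'(1,2) b0(1) poset_refl[OF PA K_val] by blast+
    ultimately have "card (down k b0) < card (down k' b0)" "card (down k b0) > 0"
      using down_mono[OF b0(1)] finite_down by (auto intro: psubset_card_mono simp: card_gt_0_iff)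
    then have "card (down k b0) - 1 < card (down k' b0) - 1" by linarith
    then show ?thesis
      unfolding \<psi>_def using assms(2) b0(1) down_mono finite_down
      by (intro sum_strict_mono_ex1) (auto intro!: diff_le_mono card_mono)
  qed
  have "inj_on \<psi> K"
  proof (rule inj_onI, rule ccontr)
    fix k k' assume "k \<in> K" "k' \<in> K" "\<psi> k = \<psi> k'" "k \<noteq> k'"
    then show False
      using chain \<psi>_less[of k k'] \<psi>_less[of k' k] by (auto simp: chain_on_def)
  qed
  then have "card K \<le> card {..(\<Sum>b\<in>B. height (S b) le)}"
    using \<psi>_bound by (intro card_inj_on_le) auto
  then show ?thesis by simp
qed

lemma long_chain_in_hom_set:
  assumes PA: "poset A leA" and PB: "poset B leB" and "finite B"
    and c: "\<And>x. x \<in> B \<Longrightarrow> chain_seq leA A h (c x)"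
    and c_mono: "\<And>x y i. x \<in> B \<Longrightarrow> y \<in> B \<Longrightarrow> leB x y \<Longrightarrow> i \<le> h \<Longrightarrow> leA (c x i) (c y i)"
  obtains K where "K \<subseteq> hom_set A leA B leB" "chain_on K (pw_le B leA)" "card K = h * card B + 1"
    and "\<forall>k\<in>K. \<forall>x\<in>B. k x \<in> c x ` {..h}"
proof -
  define n where "n = card B"
  obtain pos where pos: "bij_betw pos B {..<n}"
    and pos_mono: "\<And>x y. x \<in> B \<Longrightarrow> y \<in> B \<Longrightarrow> leB x y \<Longrightarrow> pos x \<le> pos y"
    using finite_poset_linear_extension[OF PB \<open>finite B\<close>] unfolding n_def by blast
  have pos_less: "pos x < n" if "x \<in> B" for x using bij_betw_apply[OF pos that] by simp
  have c_in: "c x i \<in> A" if "x \<in> B" "i \<le> h" for x i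
    using c[OF that(1)] that(2) by (auto simp: chain_seq_def)
  have c_le: "leA (c x i) (c x j)" if "x \<in> B" "i \<le> j" "j \<le> h" for x i j
    using c[OF that(1)] that(2,3) by (auto simp: chain_seq_def)
  \<comment> \<open>Passing from \<open>G s\<close> to \<open>G (s + 1)\<close> raises exactly the coordinate at position
    \<open>n - 1 - s mod n\<close>; levels grow with \<open>pos\<close>, which keeps every \<open>G s\<close> order-preserving.\<close>
  define level where "level s x = (s + pos x) div n" for s x
  define G where "G s = (\<lambda>x\<in>B. c x (level s x))" for s
  have level_le: "level s x \<le> h" if "s \<le> h * n" "x \<in> B" for s x
  proof -
    have "n > 0" using pos_less[OF that(2)] by simp
    moreover have "s + pos x < (h + 1) * n" using that pos_less[OF that(2)] by simp
    ultimately have "(s + pos x) div n < h + 1" by (simp only: div_less_iff_less_mult)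
    then show ?thesis unfolding level_def by simp
  qed
  have G_hom: "G s \<in> hom_set A leA B leB" if s: "s \<le> h * n" for s
    unfolding hom_set_def
  proof (intro CollectI conjI ballI impI)
    show "G s \<in> B \<rightarrow>\<^sub>E A" unfolding G_def using c_in level_le[OF s] by auto
    fix x y assume xy: "x \<in> B" "y \<in> B" "leB x y"
    have "level s x \<le> level s y" unfolding level_def using pos_mono[OF xy] by (simp add: div_le_mono)
    then have "leA (c x (level s x)) (c x (level s y))" using c_le xy level_le[OF s] by blast
    moreover have "leA (c x (level s y)) (c y (level s y))" using c_mono xy level_le[OF s] by blast
    ultimately have "leA (c x (level s x)) (c y (level s y))"
      using poset_trans[OF PA c_in[OF xy(1) level_le[OF s xy(1)]] c_in[OF xy(1) level_le[OF s xy(2)]]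
          c_in[OF xy(2) level_le[OF s xy(2)]]] by blast
    then show "leA (G s x) (G s y)" unfolding G_def using xy by simp
  qed
  have G_le: "pw_le B leA (G s) (G s')" if "s \<le> s'" "s' \<le> h * n" for s s'
    unfolding pw_le_def
  proof
    fix x assume x: "x \<in> B"
    have "level s x \<le> level s' x" unfolding level_def using that(1) by (simp add: div_le_mono)
    then show "leA (G s x) (G s' x)" unfolding G_def using c_le x level_le[OF that(2) x] by simp
  qed
  have G_neq: "G s \<noteq> G s'" if ss': "s < s'" "s' \<le> h * n" for s s'
  proof -
    have "n > 0" using ss' by (cases n) auto
    then have "n - 1 - s mod n \<in> pos ` B" using bij_betw_imp_surj_on[OF pos] by simp
    then obtain x where x: "x \<in> B" "pos x = n - 1 - s mod n" by (rule imageE) simp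
    have "s + pos x = s div n * n + (n - 1)"
      using x(2) div_mult_mod_eq[of s n] mod_less_divisor[OF \<open>n > 0\<close>, of s] by linarith
    then have "level s x = s div n"
      unfolding level_def using \<open>n > 0\<close> by (intro div_nat_eqI) (simp_all add: mult.commute)
    moreover have "(s div n + 1) * n \<le> s' + pos x"
      using \<open>s + pos x = s div n * n + (n - 1)\<close> ss'(1) \<open>n > 0\<close> by simp
    then have "s div n + 1 \<le> level s' x"
      unfolding level_def using less_eq_div_iff_mult_less_eq[OF \<open>n > 0\<close>] by blast
    moreover have "inj_on (c x) {..h}" using c[OF x(1)] by (simp add: chain_seq_def)
    moreover have "level s x \<le> h" "level s' x \<le> h" using level_le x(1) ss' by simp_all
    ultimately have "c x (level s x) \<noteq> c x (level s' x)" by (auto dest: inj_onD)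
    then show ?thesis unfolding G_def using x(1) by (metis restrict_apply')
  qed
  show ?thesis
  proof (rule that)
    show "G ` {..h * n} \<subseteq> hom_set A leA B leB" using G_hom by auto
    show "chain_on (G ` {..h * n}) (pw_le B leA)"
      unfolding chain_on_def using G_le nat_le_linear by blast
    have "inj_on G {..h * n}" by (rule linorder_inj_onI') (use G_neq in auto)
    then show "card (G ` {..h * n}) = h * card B + 1" by (simp add: card_image n_def)
    show "\<forall>k\<in>G ` {..h * n}. \<forall>x\<in>B. k x \<in> c x ` {..h}"
      using level_le unfolding G_def by auto
  qed
qed

lemma height_hom_set:
  assumes PA: "poset A leA" and "finite A" "A \<noteq> {}" and PB: "poset B leB" and "finite B"
  shows "height (hom_set A leA B leB) (pw_le B leA) = height A leA * card B"
proof (rule antisym)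
  let ?F = "hom_set A leA B leB"
  have "finite ?F" using assms by (simp add: finite_hom_set)
  then show "height ?F (pw_le B leA) \<le> height A leA * card B"
  proof (rule height_leI)
    fix K assume K: "K \<subseteq> ?F" "chain_on K (pw_le B leA)"
    have "card K \<le> (\<Sum>b\<in>B. height A leA) + 1"
    proof (rule card_chain_le_sum_heights[OF PA \<open>finite B\<close> _ _ K(2)])
      show "finite K" using finite_subset[OF K(1) \<open>finite ?F\<close>] .
      show "K \<subseteq> B \<rightarrow>\<^sub>E A" using K(1) hom_set_subset_PiE by (rule order_trans)
      show "k b \<in> A" if "k \<in> K" "b \<in> B" for k b
        using hom_set_apply that K(1) by (metis subsetD)
    qed (use assms in simp)
    then show "card K \<le> height A leA * card B + 1" by (simp add: mult.commute)
  qed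
  obtain e where e: "chain_seq leA A (height A leA) e"
    using chain_seq_height[OF PA \<open>finite A\<close> \<open>A \<noteq> {}\<close>] .
  moreover have "leA (e i) (e i)" if "i \<le> height A leA" for i
    using e that poset_refl[OF PA] by (auto simp: chain_seq_def)
  ultimately obtain K where K: "K \<subseteq> ?F" "chain_on K (pw_le B leA)" "card K = height A leA * card B + 1"
    using long_chain_in_hom_set[OF PA PB \<open>finite B\<close>, of "height A leA" "\<lambda>_. e"] by metis
  then show "height A leA * card B \<le> height ?F (pw_le B leA)"
    using card_chain_le_height[OF \<open>finite ?F\<close> K(1,2)] by linarith
qed

lemma height_interval_hom_set_le:
  assumes PA: "poset A leA" and "finite A" "finite B"
  shows "height (interval (hom_set A leA B leB) (pw_le B leA) f g) (pw_le B leA)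
           \<le> (\<Sum>b\<in>B. height (interval A leA (f b) (g b)) leA)"
proof (rule height_leI)
  let ?I = "interval (hom_set A leA B leB) (pw_le B leA) f g"
  show "finite ?I"
    using finite_subset[OF interval_subset finite_hom_set[OF assms(2,3)]] .
  fix K assume K: "K \<subseteq> ?I" "chain_on K (pw_le B leA)"
  show "card K \<le> (\<Sum>b\<in>B. height (interval A leA (f b) (g b)) leA) + 1"
  proof (rule card_chain_le_sum_heights[OF PA \<open>finite B\<close> _ _ K(2)])
    show "finite K" using finite_subset[OF K(1) \<open>finite ?I\<close>] .
    show K_PiE: "K \<subseteq> B \<rightarrow>\<^sub>E A"
      using K(1) interval_subset hom_set_subset_PiE by (rule order_trans[OF order_trans])
    show "finite (interval A leA (f b) (g b))" for b
      using \<open>finite A\<close> by (simp add: interval_def)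
    show "k b \<in> interval A leA (f b) (g b)" if "k \<in> K" "b \<in> B" for k b
    proof -
      have "leA (f b) (k b)" "leA (k b) (g b)"
        using that K(1) by (auto simp: interval_def pw_le_def)
      moreover have "k b \<in> A" using that K_PiE PiE_mem by blast
      ultimately show ?thesis by (simp add: interval_def)
    qed
  qed
qed

section \<open>Maps constant on connected components\<close>

lemma equiv_comparable_closure: "equiv UNIV ((comparable_rel B le)\<^sup>*)"
proof -
  have "sym (comparable_rel B le)" by (auto simp: sym_def comparable_rel_def)
  then show ?thesis by (simp add: equiv_def refl_rtrancl sym_rtrancl trans_rtrancl)
qed

lemma components_eq: "components B le = (\<lambda>x. (comparable_rel B le)\<^sup>* `` {x}) ` B"
  unfolding components_def quotient_def by blast

lemma comparable_closure_const:
  assumes "\<And>x y. x \<in> B \<Longrightarrow> y \<in> B \<Longrightarrow> le x y \<Longrightarrow> f x = f y"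
    and "(x, y) \<in> (comparable_rel B le)\<^sup>*"
  shows "f x = f y"
  using assms(2) by induction (auto simp: comparable_rel_def dest: assms(1))

lemma D_set_iff:
  "f \<in> D_set A leA B leB \<longleftrightarrow>
     f \<in> hom_set A leA B leB \<and> (\<forall>x\<in>B. \<forall>y\<in>B. leB x y \<longrightarrow> f x = f y)"
proof -
  let ?R = "(comparable_rel B leB)\<^sup>*"
  have "(\<forall>C\<in>components B leB. \<forall>x\<in>C. \<forall>y\<in>C. f x = f y)
          \<longleftrightarrow> (\<forall>x\<in>B. \<forall>y\<in>B. leB x y \<longrightarrow> f x = f y)"
  proof
    assume const: "\<forall>C\<in>components B leB. \<forall>x\<in>C. \<forall>y\<in>C. f x = f y"
    show "\<forall>x\<in>B. \<forall>y\<in>B. leB x y \<longrightarrow> f x = f y"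
    proof (intro ballI impI)
      fix x y assume xy: "x \<in> B" "y \<in> B" "leB x y"
      then have "(x, y) \<in> ?R" by (intro r_into_rtrancl) (simp add: comparable_rel_def)
      moreover have "?R `` {x} \<in> components B leB" using xy(1) by (simp add: components_eq)
      ultimately show "f x = f y" using const[rule_format, of "?R `` {x}" x y] by simp
    qed
  next
    assume "\<forall>x\<in>B. \<forall>y\<in>B. leB x y \<longrightarrow> f x = f y"
    then have R_const: "f x = f y" if "(x, y) \<in> ?R" for x y
      by (intro comparable_closure_const[OF _ that]) blast
    show "\<forall>C\<in>components B leB. \<forall>x\<in>C. \<forall>y\<in>C. f x = f y"
    proof (intro ballI)
      fix C x y assume "C \<in> components B leB" "x \<in> C" "y \<in> C"
      then obtain z where "(z, x) \<in> ?R" "(z, y) \<in> ?R" by (auto simp: components_eq)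
      then show "f x = f y" by (metis R_const)
    qed
  qed
  then show ?thesis by (simp add: D_set_def)
qed

lemma D_set_hom_set: "f \<in> D_set A leA B leB \<Longrightarrow> f \<in> hom_set A leA B leB"
  by (simp add: D_set_def)

lemma D_set_const_on_components:
  assumes "f \<in> D_set A leA B leB" "(x, y) \<in> (comparable_rel B leB)\<^sup>*"
  shows "f x = f y"
proof (rule comparable_closure_const[OF _ assms(2)])
  show "f x = f y" if "x \<in> B" "y \<in> B" "leB x y" for x y
    using assms(1) that unfolding D_set_iff by blast
qed

lemma bij_betw_components_D_set:
  fixes A :: "'a set" and B :: "'b set" and leB :: "'b \<Rightarrow> 'b \<Rightarrow> bool"
  assumes PA: "poset A leA"
  defines "R \<equiv> (comparable_rel B leB)\<^sup>*"
  shows "bij_betw (\<lambda>h. \<lambda>x\<in>B. h (R `` {x})) (components B leB \<rightarrow>\<^sub>E A) (D_set A leA B leB)"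
proof -
  let ?C = "components B leB"
  define extend :: "('b set \<Rightarrow> 'a) \<Rightarrow> 'b \<Rightarrow> 'a" where "extend = (\<lambda>h. \<lambda>x\<in>B. h (R `` {x}))"
  define restr where "restr f = (\<lambda>C\<in>?C. f (SOME x. x \<in> C \<inter> B))" for f :: "'b \<Rightarrow> 'a"
  have class_eq: "R `` {x} = R `` {y}" if "(x, y) \<in> R" for x y
    using equiv_class_eq[OF equiv_comparable_closure that[unfolded R_def]] unfolding R_def .
  have some_in: "(SOME z. z \<in> R `` {x} \<inter> B) \<in> R `` {x} \<inter> B" if "x \<in> B" for x
    by (rule someI[of _ x]) (simp add: that R_def)
  have class_in: "R `` {x} \<in> ?C" if "x \<in> B" for x
    unfolding components_eq R_def using that by (rule imageI)
  have "bij_betw extend (?C \<rightarrow>\<^sub>E A) (D_set A leA B leB)"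
  proof (intro bij_betw_byWitness[where f' = restr] ballI image_subsetI)
    show "restr (extend h) = h" if h: "h \<in> ?C \<rightarrow>\<^sub>E A" for h
    proof -
      have "restr (extend h) C = h C" if C: "C \<in> ?C" for C
      proof -
        obtain x where x: "x \<in> B" "C = R `` {x}" using C by (auto simp: components_eq R_def)
        define z where "z = (SOME z. z \<in> R `` {x} \<inter> B)"
        have z: "z \<in> R `` {x} \<inter> B" unfolding z_def using some_in[OF x(1)] .
        then have "R `` {z} = R `` {x}" using class_eq[of x z] by simp
        then show ?thesis using x C z by (simp add: restr_def extend_def z_def)
      qed
      then have "restr (extend h) = restrict h ?C" by (auto simp: restr_def fun_eq_iff)
      then show ?thesis using PiE_restrict[OF h] by simp
    qed
    show "extend (restr f) = f" if f: "f \<in> D_set A leA B leB" for f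
    proof -
      have "extend (restr f) x = f x" if "x \<in> B" for x
      proof -
        define z where "z = (SOME z. z \<in> R `` {x} \<inter> B)"
        have "f z = f x"
          using D_set_const_on_components[OF f, of x z] some_in[OF that] unfolding z_def R_def by simp
        then show ?thesis using that class_in[OF that] by (simp add: extend_def restr_def z_def)
      qed
      moreover have "f \<in> B \<rightarrow>\<^sub>E A" using subsetD[OF hom_set_subset_PiE D_set_hom_set[OF f]] .
      ultimately show ?thesis by (auto simp: extend_def intro!: PiE_ext[of _ B "\<lambda>_. A"])
    qed
    show "extend h \<in> D_set A leA B leB" if h: "h \<in> ?C \<rightarrow>\<^sub>E A" for h
    proof -
      have const: "extend h x = extend h y" if "x \<in> B" "y \<in> B" "leB x y" for x y
      proof -
        have "(x, y) \<in> R" unfolding R_def using that by (intro r_into_rtrancl) (simp add: comparable_rel_def)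
        then show ?thesis using that class_eq[of x y] by (simp add: extend_def)
      qed
      have in_A: "h (R `` {x}) \<in> A" if "x \<in> B" for x using PiE_mem[OF h class_in[OF that]] .
      have "extend h \<in> hom_set A leA B leB"
        unfolding hom_set_def using in_A const poset_refl[OF PA] by (auto simp: extend_def)
      then show ?thesis using const by (simp add: D_set_iff)
    qed
    show "restr f \<in> ?C \<rightarrow>\<^sub>E A" if f: "f \<in> D_set A leA B leB" for f
    proof -
      have "f (SOME x. x \<in> C \<inter> B) \<in> A" if C: "C \<in> ?C" for C
      proof -
        obtain x where "x \<in> B" "C = R `` {x}" using C by (auto simp: components_eq R_def)
        then have "(SOME x. x \<in> C \<inter> B) \<in> B" using some_in by blast
        then show ?thesis using hom_set_apply[OF D_set_hom_set[OF f]] by blast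
      qed
      then show ?thesis by (simp add: restr_def)
    qed
  qed
  then show ?thesis unfolding extend_def .
qed

lemma card_D_set:
  assumes "poset A leA" "finite B"
  shows "card (D_set A leA B leB) = card A ^ card (components B leB)"
proof -
  have "card (D_set A leA B leB) = card (components B leB \<rightarrow>\<^sub>E A)"
    using bij_betw_same_card[OF bij_betw_components_D_set[OF assms(1), of B leB]] by simp
  also have "\<dots> = card A ^ card (components B leB)"
    using \<open>finite B\<close> by (simp add: card_PiE components_eq)
  finally show ?thesis .
qed

section \<open>Intervals of full height\<close>

lemma D_set_if_full_height_intervals:
  assumes PA: "poset A leA" and "finite A"
    and f: "f \<in> hom_set A leA B leB" and g: "g \<in> hom_set A leA B leB" and "pw_le B leA f g"
    and full: "\<And>b. b \<in> B \<Longrightarrow> height (interval A leA (f b) (g b)) leA = height A leA"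
  shows "f \<in> D_set A leA B leB" and "g \<in> D_set A leA B leB"
proof -
  have f_in: "f x \<in> A" and g_in: "g x \<in> A" if "x \<in> B" for x
    using hom_set_apply[OF f that] hom_set_apply[OF g that] .
  \<comment> \<open>A maximal-height interval admits no comparable point outside it.\<close>
  have no_outside: False
    if b: "b \<in> B" and a: "a \<in> A" "a \<notin> interval A leA (f b) (g b)"
      and comp: "\<And>z. z \<in> interval A leA (f b) (g b) \<Longrightarrow> leA a z \<or> leA z a" for a b
  proof -
    have "f b \<in> interval A leA (f b) (g b)"
      using f_in[OF b] b \<open>pw_le B leA f g\<close> poset_refl[OF PA] by (simp add: interval_def pw_le_def)
    then have "height (interval A leA (f b) (g b)) leA < height A leA"
      using a comp by (intro height_less_by_comparable_point[OF PA \<open>finite A\<close> interval_subset]) auto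
    then show False using full[OF b] by simp
  qed
  have "f x = f y" if xy: "x \<in> B" "y \<in> B" "leB x y" for x y
  proof (rule ccontr)
    assume "f x \<noteq> f y"
    have fxy: "leA (f x) (f y)" using hom_set_mono[OF f xy] .
    show False
    proof (rule no_outside[OF xy(2) f_in[OF xy(1)]])
      show "f x \<notin> interval A leA (f y) (g y)"
        using \<open>f x \<noteq> f y\<close> poset_antisym[OF PA f_in[OF xy(1)] f_in[OF xy(2)] fxy]
        by (auto simp: interval_def)
      show "leA (f x) z \<or> leA z (f x)" if "z \<in> interval A leA (f y) (g y)" for z
        using that poset_trans[OF PA f_in[OF xy(1)] f_in[OF xy(2)] _ fxy] by (auto simp: interval_def)
    qed
  qed
  then show "f \<in> D_set A leA B leB" using f by (simp add: D_set_iff)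
  have "g x = g y" if xy: "x \<in> B" "y \<in> B" "leB x y" for x y
  proof (rule ccontr)
    assume "g x \<noteq> g y"
    have gxy: "leA (g x) (g y)" using hom_set_mono[OF g xy] .
    show False
    proof (rule no_outside[OF xy(1) g_in[OF xy(2)]])
      show "g y \<notin> interval A leA (f x) (g x)"
        using \<open>g x \<noteq> g y\<close> poset_antisym[OF PA g_in[OF xy(1)] g_in[OF xy(2)] gxy]
        by (auto simp: interval_def)
      show "leA (g y) z \<or> leA z (g y)" if "z \<in> interval A leA (f x) (g x)" for z
        using that poset_trans[OF PA _ g_in[OF xy(1)] g_in[OF xy(2)] _ gxy] by (auto simp: interval_def)
    qed
  qed
  then show "g \<in> D_set A leA B leB" using g by (simp add: D_set_iff)
qed

lemma height_interval_hom_set_ge: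
  assumes PA: "poset A leA" and "finite A" and PB: "poset B leB" and "finite B"
    and f: "f \<in> D_set A leA B leB" and g: "g \<in> D_set A leA B leB" and fg: "pw_le B leA f g"
    and h: "\<And>b. b \<in> B \<Longrightarrow> height (interval A leA (f b) (g b)) leA = h"
  shows "h * card B \<le> height (interval (hom_set A leA B leB) (pw_le B leA) f g) (pw_le B leA)"
proof -
  let ?I = "interval (hom_set A leA B leB) (pw_le B leA) f g"
  define c where "c x = (SOME e. chain_seq leA (interval A leA (f x) (g x)) h e)" for x
  have c: "chain_seq leA (interval A leA (f x) (g x)) h (c x)" if x: "x \<in> B" for x
  proof -
    have "f x \<in> A" using hom_set_apply[OF D_set_hom_set[OF f] x] .
    then have "f x \<in> interval A leA (f x) (g x)"
      using fg x poset_refl[OF PA] by (simp add: interval_def pw_le_def)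
    then obtain e where "chain_seq leA (interval A leA (f x) (g x)) h e"
      using chain_seq_height[OF poset_subset[OF PA interval_subset]
          finite_subset[OF interval_subset \<open>finite A\<close>]] h[OF x] by blast
    then show ?thesis
      unfolding c_def by (rule someI[where P = "chain_seq leA (interval A leA (f x) (g x)) h"])
  qed
  have c_A: "chain_seq leA A h (c x)" if "x \<in> B" for x
    using c[OF that] interval_subset[of A leA "f x" "g x"] by (auto simp: chain_seq_def)
  have c_mono: "leA (c x i) (c y i)" if "x \<in> B" "y \<in> B" "leB x y" "i \<le> h" for x y i
  proof -
    have "f x = f y" "g x = g y" using f g that(1-3) unfolding D_set_iff by blast+
    then have "c x = c y" by (simp add: c_def)
    then show ?thesis using c_A[OF that(2)] that(4) poset_refl[OF PA] by (auto simp: chain_seq_def)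
  qed
  obtain K where K: "K \<subseteq> hom_set A leA B leB" "chain_on K (pw_le B leA)" "card K = h * card B + 1"
    and K_val: "\<forall>k\<in>K. \<forall>x\<in>B. k x \<in> c x ` {..h}"
    by (rule long_chain_in_hom_set[where c = c, OF PA PB \<open>finite B\<close> c_A c_mono])
  have "K \<subseteq> ?I"
  proof
    fix k assume "k \<in> K"
    then have "k x \<in> interval A leA (f x) (g x)" if "x \<in> B" for x
      using K_val c[OF that] that by (auto simp: chain_seq_def)
    then show "k \<in> ?I" using \<open>k \<in> K\<close> K(1) by (auto simp: interval_def pw_le_def)
  qed
  have "finite ?I" using finite_subset[OF interval_subset finite_hom_set[OF \<open>finite A\<close> \<open>finite B\<close>]] .
  then show ?thesis using card_chain_le_height[OF _ \<open>K \<subseteq> ?I\<close> K(2)] K(3) by linarith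
qed

lemma height_interval_eq_height_iff:
  assumes PA: "poset A leA" and "finite A" "A \<noteq> {}" and PB: "poset B leB" and "finite B"
    and f: "f \<in> hom_set A leA B leB" and g: "g \<in> hom_set A leA B leB" and fg: "pw_le B leA f g"
  shows "height (interval (hom_set A leA B leB) (pw_le B leA) f g) (pw_le B leA)
           = height (hom_set A leA B leB) (pw_le B leA)
         \<longleftrightarrow> f \<in> D_set A leA B leB \<and> g \<in> D_set A leA B leB
            \<and> (\<forall>b\<in>B. height (interval A leA (f b) (g b)) leA = height A leA)"
    (is "?hI = ?hF \<longleftrightarrow> _")
proof -
  have hF: "?hF = height A leA * card B" using height_hom_set[OF PA assms(2,3) PB assms(5)] .
  have hb_le: "height (interval A leA (f b) (g b)) leA \<le> height A leA" for b
    using height_mono[OF \<open>finite A\<close> interval_subset] .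
  show ?thesis
  proof
    assume "?hI = ?hF"
    then have "(\<Sum>b\<in>B. height A leA) \<le> (\<Sum>b\<in>B. height (interval A leA (f b) (g b)) leA)"
      using height_interval_hom_set_le[OF PA assms(2,5), where leB = leB and f = f and g = g] hF
      by (simp add: mult.commute)
    then have sum_eq: "(\<Sum>b\<in>B. height (interval A leA (f b) (g b)) leA) = (\<Sum>b\<in>B. height A leA)"
      using sum_mono[of B, OF hb_le] by (intro antisym)
    have full: "\<forall>b\<in>B. height (interval A leA (f b) (g b)) leA = height A leA"
      using sum_mono_inv[OF sum_eq hb_le _ \<open>finite B\<close>] by blast
    then show "f \<in> D_set A leA B leB \<and> g \<in> D_set A leA B leB
      \<and> (\<forall>b\<in>B. height (interval A leA (f b) (g b)) leA = height A leA)"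
      using D_set_if_full_height_intervals[OF PA \<open>finite A\<close> f g fg] by blast
  next
    assume "f \<in> D_set A leA B leB \<and> g \<in> D_set A leA B leB
      \<and> (\<forall>b\<in>B. height (interval A leA (f b) (g b)) leA = height A leA)"
    then have "?hF \<le> ?hI"
      using height_interval_hom_set_ge[OF PA \<open>finite A\<close> PB \<open>finite B\<close> _ _ fg] hF by auto
    moreover have "?hI \<le> ?hF"
      using height_mono[OF finite_hom_set[OF \<open>finite A\<close> \<open>finite B\<close>] interval_subset] .
    ultimately show "?hI = ?hF" by simp
  qed
qed

section \<open>Empty and antichain exponentials\<close>

lemma hom_set_empty_iff:
  assumes "poset A leA"
  shows "hom_set A leA B leB = {} \<longleftrightarrow> A = {} \<and> B \<noteq> {}"
proof
  assume empty: "hom_set A leA B leB = {}"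
  have "A = {}" using const_in_hom_set[OF assms] empty by blast
  moreover have "B \<noteq> {}" using empty by (auto simp: hom_set_def)
  ultimately show "A = {} \<and> B \<noteq> {}" ..
next
  assume "A = {} \<and> B \<noteq> {}"
  then show "hom_set A leA B leB = {}" using hom_set_subset_PiE[of A leA B leB] by auto
qed

lemma antichain_hom_set_iff:
  assumes PA: "poset A leA"
  shows "antichain_on (hom_set A leA B leB) (pw_le B leA) \<longleftrightarrow> antichain_on A leA \<or> B = {}"
proof
  assume anti: "antichain_on (hom_set A leA B leB) (pw_le B leA)"
  show "antichain_on A leA \<or> B = {}"
  proof (cases "B = {}")
    case False
    then obtain b where b: "b \<in> B" by blast
    have "x = y" if "x \<in> A" "y \<in> A" "leA x y" for x y
    proof -
      have "pw_le B leA (\<lambda>_\<in>B. x) (\<lambda>_\<in>B. y)" using that by (simp add: pw_le_def)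
      then have "(\<lambda>_\<in>B. x) = (\<lambda>_\<in>B. y)"
        using anti const_in_hom_set[OF PA that(1), of B leB] const_in_hom_set[OF PA that(2), of B leB]
        unfolding antichain_on_def by blast
      then show "x = y" using b by (metis restrict_apply')
    qed
    then show ?thesis by (simp add: antichain_on_def)
  qed simp
next
  assume "antichain_on A leA \<or> B = {}"
  then have "f = g"
    if "f \<in> hom_set A leA B leB" "g \<in> hom_set A leA B leB" "pw_le B leA f g" for f g
    using that hom_set_apply[OF that(1)] hom_set_apply[OF that(2)]
    by (intro PiE_ext[OF subsetD[OF hom_set_subset_PiE that(1)] subsetD[OF hom_set_subset_PiE that(2)]])
      (auto simp: antichain_on_def pw_le_def)
  then show "antichain_on (hom_set A leA B leB) (pw_le B leA)" by (simp add: antichain_on_def)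
qed

lemma hom_set_eq_D_set:
  assumes "antichain_on A leA \<or> B = {}"
  shows "hom_set A leA B leB = D_set A leA B leB"
proof -
  have "f x = f y" if "f \<in> hom_set A leA B leB" "x \<in> B" "y \<in> B" "leB x y" for f x y
    using assms that hom_set_mono[OF that] hom_set_apply[OF that(1)] by (auto simp: antichain_on_def)
  then show ?thesis by (auto simp: D_set_iff)
qed

lemma card_hom_set_if_antichain:
  assumes "poset A leA" "finite B" "antichain_on (hom_set A leA B leB) (pw_le B leA)"
  shows "card (hom_set A leA B leB) = card A ^ card (components B leB)"
proof -
  have "antichain_on A leA \<or> B = {}" using antichain_hom_set_iff[OF assms(1)] assms(3) ..
  then have "hom_set A leA B leB = D_set A leA B leB" by (rule hom_set_eq_D_set)
  then show ?thesis using card_D_set[OF assms(1,2)] by simp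
qed

theorem lemma9:
  fixes A :: "'a set" and leA :: "'a \<Rightarrow> 'a \<Rightarrow> bool"
    and B :: "'b set" and leB :: "'b \<Rightarrow> 'b \<Rightarrow> bool"
  assumes "finite A" "poset A leA" "finite B" "poset B leB"
  defines "F \<equiv> hom_set A leA B leB" and "leF \<equiv> pw_le B leA"
  shows "(F = {} \<longleftrightarrow> A = {} \<and> B \<noteq> {})
    \<and> ((antichain_on F leF \<longleftrightarrow> antichain_on A leA \<or> B = {})
       \<and> (antichain_on F leF \<longrightarrow>
            ((A \<noteq> {} \<or> B \<noteq> {}) \<longrightarrow> card F = card A ^ card (components B leB))
            \<and> (A = {} \<and> B = {} \<longrightarrow> card F = 1)))
    \<and> (A \<noteq> {} \<longrightarrow> (\<forall>f\<in>F. \<forall>g\<in>F. leF f g \<longrightarrow>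
          (height (interval F leF f g) leF = height F leF \<longleftrightarrow>
            f \<in> D_set A leA B leB \<and> g \<in> D_set A leA B leB
            \<and> (\<forall>b\<in>B. height (interval A leA (f b) (g b)) leA = height A leA))))
    \<and> (A \<noteq> {} \<longrightarrow> height F leF = height A leA * card B)"
proof -
  have card_F: "card F = card A ^ card (components B leB)" if "antichain_on F leF"
    using card_hom_set_if_antichain[OF assms(2,3)] that unfolding F_def leF_def .
  have "components {} leB = {}" by (simp add: components_def)
  show ?thesis
  proof (intro conjI impI ballI)
    show "F = {} \<longleftrightarrow> A = {} \<and> B \<noteq> {}" unfolding F_def by (rule hom_set_empty_iff[OF assms(2)])
    show "antichain_on F leF \<longleftrightarrow> antichain_on A leA \<or> B = {}"
      unfolding F_def leF_def by (rule antichain_hom_set_iff[OF assms(2)])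
    show "card F = card A ^ card (components B leB)" if "antichain_on F leF"
      using card_F[OF that] .
    show "card F = 1" if "antichain_on F leF" "A = {} \<and> B = {}"
      using card_F[OF that(1)] that(2) \<open>components {} leB = {}\<close> by simp
    show "height (interval F leF f g) leF = height F leF \<longleftrightarrow>
        f \<in> D_set A leA B leB \<and> g \<in> D_set A leA B leB
        \<and> (\<forall>b\<in>B. height (interval A leA (f b) (g b)) leA = height A leA)"
      if "A \<noteq> {}" "f \<in> F" "g \<in> F" "leF f g" for f g
      using that unfolding F_def leF_def by (rule height_interval_eq_height_iff[OF assms(2,1) _ assms(4,3)])
    show "height F leF = height A leA * card B" if "A \<noteq> {}"
      unfolding F_def leF_def by (rule height_hom_set[OF assms(2,1) that assms(4,3)])
  qed
qed

end
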